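(* Let $l,t,s,n$ be integers with $3\leq l\leq t$, $s\geq l+1$ and $n\geq 2\binom{3s}{2}$. Then $$ex(n,\{K_{l,t},M_{s+1}\})\leq (t-1)\binom{s}{l}+(l-1)n-\frac{l(l-1)}{2}+ex(2(s-l)+1,K_{l,t}).$$
   Context: All graphs are finite and simple. $ex(n,\mathscr{F})$ is the maximum number of edges of an $n$-vertex graph containing no member of $\mathscr{F}$ as a subgraph, and $ex(m,K_{l,t})=ex(m,\{K_{l,t}\})$. $K_{l,t}$ is the complete bipartite graph with parts of sizes $l,t$; $M_{s+1}$ is the matching of $s+1$ disjoint edges. *)

theory Defs
  imports Complex_Main
begin

type_synonym 'a sgraph = "'a set \<times> 'a set set"

definition simple_graph :: "'a sgraph \<Rightarrow> bool" where
  "simple_graph G \<longleftrightarrow> finite (fst G) \<and>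
     snd G \<subseteq> {e. \<exists>u v. u \<in> fst G \<and> v \<in> fst G \<and> u \<noteq> v \<and> e = {u, v}}"

definition subgraph_of :: "'b sgraph \<Rightarrow> 'a sgraph \<Rightarrow> bool" where
  "subgraph_of H G \<longleftrightarrow> (\<exists>f. inj_on f (fst H) \<and> f ` fst H \<subseteq> fst G \<and>
                                (\<forall>e\<in>snd H. f ` e \<in> snd G))"

definition K_bip :: "nat \<Rightarrow> nat \<Rightarrow> nat sgraph" where
  "K_bip l t = ({0..<l+t}, {{i, j} | i j. i < l \<and> l \<le> j \<and> j < l + t})"

definition matching_graph :: "nat \<Rightarrow> nat sgraph" where
  "matching_graph k = ({0..<2*k}, {{2*i, 2*i+1} | i. i < k})"

definition ex :: "nat \<Rightarrow> nat sgraph set \<Rightarrow> nat" where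
  "ex n F = Max {card E | E. simple_graph ({0..<n}, E) \<and>
                              (\<forall>H\<in>F. \<not> subgraph_of H ({0..<n}, E))}"

end

theory Submission
  imports Defs
begin

(* Let L be the set of vertices of degree at least 3s. Its vertices can be matched greedily, so |L|
   plus the size of any matching avoiding L is at most s. Fix a maximum matching M avoiding L; the
   vertices outside L and V(M) form an independent set I. Call a vertex heavy if it has two
   neighbours in I. Exchanging one or two M-edges for more edges shows that the M-partner of a heavy
   vertex has no neighbour in I and that such partners are pairwise non-adjacent. Hence, with
   S = L \<union> {heavy matched vertices}, the only edges avoiding S lie on the vertices of the light
   M-edges or join them to the partners and to I, at most q (2q + 2h + 1) edges for q light and h
   heavy M-edges. Edges meeting S are bounded through d \<le> (l - 1) + C(d, l) and the K_{l,t}-free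
   double count \<Sum>_v C(d_S(v), l) \<le> (t - 1) C(|S|, l); the gap between (t - 1) C(|S|, l) and
   (t - 1) C(s, l) then pays for q (2q + 2h + 1), with ex(2(s - l) + 1, K_{l,t}) covering s - l \<le> 2.
   When |L| \<le> l - 2 all terms beyond (l - 2) n are O(s^2), and n \<ge> 2 C(3s, 2) absorbs them. *)

section \<open>Binomial estimates\<close>

lemma le_choose_plus:
  assumes "0 < l"
  shows "d \<le> (l - 1) + (d choose l)"
proof (induction d)
  case 0
  then show ?case by simp
next
  case (Suc d)
  show ?case
  proof (cases "d < l - 1")
    case True
    then show ?thesis by simp
  next
    case False
    then have "0 < d choose (l - 1)" by (simp add: zero_less_binomial)
    moreover have "Suc d choose l = (d choose (l - 1)) + (d choose l)"
      using assms by (cases l) simp_all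
    ultimately show ?thesis using Suc.IH by linarith
  qed
qed

lemma twice_choose_two: "2 * (x choose 2) = x * (x - 1)"
proof -
  have "even (x * (x - 1))" by (cases "even x") auto
  then show ?thesis by (simp add: choose_two)
qed

lemma six_choose_three_int: "6 * int (x choose 3) = int x * (int x - 1) * (int x - 2)"
proof (induction x)
  case 0
  then show ?case by simp
next
  case (Suc x)
  have "Suc x choose 3 = (x choose 2) + (x choose 3)"
    by (simp add: numeral_3_eq_3 numeral_2_eq_2)
  moreover have "2 * int (x choose 2) = int x * (int x - 1)"
  proof (cases x)
    case (Suc y)
    have "int (2 * (x choose 2)) = int (x * (x - 1))" by (simp only: twice_choose_two)
    then show ?thesis using Suc by (simp add: algebra_simps)
  qed simp
  ultimately show ?case using Suc.IH by (simp add: algebra_simps)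
qed

lemma cubic_increment:
  fixes K m :: int
  assumes "6 \<le> K" "2 \<le> m" "m \<le> K"
  shows "m * (m - 1) * (m - 2) + 3 * (K - m) * (2 * K - 3) \<le> K * (K - 1) * (K - 2)"
proof -
  have "K * (K - 1) * (K - 2) - m * (m - 1) * (m - 2) - 3 * (K - m) * (2 * K - 3)
      = (K - m) * ((K - 6) * (K - 1) + 3 + (m - 2) * (K + m - 1))"
    by (simp add: algebra_simps)
  moreover have "0 \<le> (K - 6) * (K - 1)" "0 \<le> (m - 2) * (K + m - 1)"
    using assms by simp_all
  then have "0 \<le> (K - m) * ((K - 6) * (K - 1) + 3 + (m - 2) * (K + m - 1))"
    using assms by simp
  ultimately show ?thesis by linarith
qed

lemma choose_three_increment:
  assumes "1 \<le> k" "q \<le> k + 1"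
    and small: "k \<le> 2 \<Longrightarrow> (2 * k + 1) choose 2 \<le> X"
  shows "q * (2 * k + 3) + 2 * ((k + 3 - q) choose 3) \<le> 2 * ((k + 3) choose 3) + X"
proof -
  consider "k = 1" | "k = 2" | "3 \<le> k" using assms(1) by linarith
  then show ?thesis
  proof cases
    case 1
    with small have "3 \<le> X" by (simp add: eval_nat_numeral)
    moreover have "q = 0 \<or> q = 1 \<or> q = 2" using assms(2) 1 by linarith
    ultimately show ?thesis using 1 by (auto simp: eval_nat_numeral)
  next
    case 2
    with small have "10 \<le> X" by (simp add: eval_nat_numeral)
    moreover have "q = 0 \<or> q = 1 \<or> q = 2 \<or> q = 3" using assms(2) 2 by linarith
    ultimately show ?thesis using 2 by (auto simp: eval_nat_numeral)
  next
    case 3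
    define m where "m = k + 3 - q"
    have m: "2 \<le> m" "int m = int (k + 3) - int q" using assms(2) by (auto simp: m_def)
    have "int m * (int m - 1) * (int m - 2) + 3 * (int (k + 3) - int m) * (2 * int (k + 3) - 3)
        \<le> int (k + 3) * (int (k + 3) - 1) * (int (k + 3) - 2)"
      by (rule cubic_increment) (use 3 m in auto)
    then have "6 * int (m choose 3) + 3 * (int q * (2 * int k + 3)) \<le> 6 * int ((k + 3) choose 3)"
      unfolding six_choose_three_int m(2) by (simp add: algebra_simps)
    then have "int (6 * (m choose 3) + 3 * (q * (2 * k + 3))) \<le> int (6 * ((k + 3) choose 3))"
      by simp
    then have "6 * (m choose 3) + 3 * (q * (2 * k + 3)) \<le> 6 * ((k + 3) choose 3)"
      by (simp only: of_nat_le_iff)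
    then show ?thesis unfolding m_def by linarith
  qed
qed

text \<open>Stated without subtraction: the increment C(j + k, j) - C(j + k - q, j) grows with j.\<close>

lemma choose_increment_mono:
  assumes "j \<le> l" "q \<le> j + k"
  shows "((j + k) choose j) + ((l + k - q) choose l) \<le> ((l + k) choose l) + ((j + k - q) choose j)"
  using assms(1)
proof (induction l rule: dec_induct)
  case base
  then show ?case by simp
next
  case (step l)
  have "Suc l + k - q = Suc (l + k - q)" using assms(2) step(1) by simp
  then have "(Suc l + k - q) choose Suc l = ((l + k - q) choose l) + ((l + k - q) choose Suc l)"
    by simp
  moreover have "(Suc l + k) choose Suc l = ((l + k) choose l) + ((l + k) choose Suc l)"
    by simp
  moreover have "(l + k - q) choose Suc l \<le> (l + k) choose Suc l"
    by (rule binomial_right_mono) simp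
  ultimately show ?case using step.IH by linarith
qed

text \<open>In the application q (2q + 2h + 1) bounds the edges outside the core S with p = |S|, and
  X = ex(2(s - l) + 1, K_{l,t}) is needed only when s - l \<le> 2.\<close>

lemma matching_term_bound:
  assumes "3 \<le> l" "3 \<le> t" "l < s" "l - 1 \<le> p" "p + q \<le> s" "q + h + l \<le> s + 1"
    and small: "s - l \<le> 2 \<Longrightarrow> (2 * (s - l) + 1) choose 2 \<le> X"
  shows "q * (2 * q + 2 * h + 1) + (t - 1) * (p choose l) \<le> (t - 1) * (s choose l) + X"
proof -
  define k where "k = s - l"
  have s: "s = l + k" and k: "1 \<le> k" using assms(3) by (auto simp: k_def)
  have qk: "q \<le> k + 1" using assms(1,4,5) s by linarith
  have "q * (2 * q + 2 * h + 1) \<le> q * (2 * k + 3)"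
    using assms(6) s by (intro mult_le_mono2) linarith
  moreover have "q * (2 * k + 3) + 2 * ((k + 3 - q) choose 3) \<le> 2 * ((k + 3) choose 3) + X"
    by (rule choose_three_increment[OF k qk]) (use small k_def in simp)
  moreover have "((k + 3) choose 3) + ((s - q) choose l) \<le> (s choose l) + ((k + 3 - q) choose 3)"
    using choose_increment_mono[of 3 l q k] assms(1) qk s by (simp add: add.commute)
  moreover have "p choose l \<le> (s - q) choose l"
    using assms(5) by (intro binomial_right_mono) simp
  moreover define d where "d = (s choose l) - (p choose l)"
  have d: "s choose l = (p choose l) + d"
    using assms(5) binomial_right_mono[of p s l] by (simp add: d_def)
  ultimately have "q * (2 * q + 2 * h + 1) \<le> 2 * d + X"
    by linarith
  moreover have "2 * d \<le> (t - 1) * d"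
    using assms(2) by (intro mult_le_mono1) simp
  moreover have "(t - 1) * (s choose l) = (t - 1) * (p choose l) + (t - 1) * d"
    by (simp add: d add_mult_distrib2)
  ultimately show ?thesis by linarith
qed

section \<open>Simple graphs on an initial segment of the naturals\<close>

locale nat_graph =
  fixes n :: nat and E :: "nat set set"
  assumes simple: "simple_graph ({0..<n}, E)"
begin

definition adj :: "nat \<Rightarrow> nat \<Rightarrow> bool" where
  "adj u v \<longleftrightarrow> {u, v} \<in> E"

definition nbhd :: "nat \<Rightarrow> nat set" where
  "nbhd v = {u. adj v u}"

definition arcs :: "nat set \<Rightarrow> nat set \<Rightarrow> nat" where
  "arcs A B = (\<Sum>u\<in>A. card (nbhd u \<inter> B))"

definition matching :: "nat set set \<Rightarrow> bool" where
  "matching M \<longleftrightarrow> M \<subseteq> E \<and> (\<forall>e\<in>M. \<forall>e'\<in>M. e \<noteq> e' \<longrightarrow> e \<inter> e' = {})"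

lemma edge_doubleton: "e \<in> E \<Longrightarrow> \<exists>u v. u < n \<and> v < n \<and> u \<noteq> v \<and> e = {u, v}"
  using simple unfolding simple_graph_def by auto

lemma edge_eq: "e \<in> E \<Longrightarrow> x \<in> e \<Longrightarrow> y \<in> e \<Longrightarrow> x \<noteq> y \<Longrightarrow> e = {x, y}"
  using edge_doubleton by blast

lemma edges_subset: "E \<subseteq> Pow {0..<n}"
  using simple unfolding simple_graph_def by auto

lemma finite_edges: "finite E"
  using edges_subset by (rule finite_subset) simp

lemma adj_commute: "adj u v = adj v u"
  unfolding adj_def by (simp add: insert_commute)

lemma adjD:
  assumes "adj u v"
  shows "u < n" "v < n" "u \<noteq> v"
proof -
  obtain x y where "x < n" "y < n" "x \<noteq> y" "{u, v} = {x, y}"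
    using assms edge_doubleton unfolding adj_def by blast
  then show "u < n" "v < n" "u \<noteq> v" by (auto simp: doubleton_eq_iff)
qed

lemma mem_nbhd_iff: "u \<in> nbhd v \<longleftrightarrow> adj v u"
  by (simp add: nbhd_def)

lemma nbhd_subset: "nbhd v \<subseteq> {0..<n}"
  using adjD unfolding nbhd_def by auto

lemma finite_nbhd: "finite (nbhd v)"
  using nbhd_subset by (rule finite_subset) simp

lemma not_mem_nbhd_self: "v \<notin> nbhd v"
  using adjD(3) by (auto simp: mem_nbhd_iff)

lemma arcs_commute:
  assumes "finite A" "finite B"
  shows "arcs A B = arcs B A"
proof -
  have "arcs X Y = (\<Sum>u\<in>X. \<Sum>v\<in>Y. if adj u v then 1 else 0)" if "finite Y" for X Y
    unfolding arcs_def
  proof (rule sum.cong[OF refl])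
    fix u
    have "nbhd u \<inter> Y = {v\<in>Y. adj u v}" by (auto simp: mem_nbhd_iff)
    then show "card (nbhd u \<inter> Y) = (\<Sum>v\<in>Y. if adj u v then 1 else 0)"
      using that by (simp add: sum.inter_filter[symmetric])
  qed
  then show ?thesis
    using assms by (simp add: sum.swap[of _ A] adj_commute)
qed

lemma arcs_Un_left:
  "A \<inter> A' = {} \<Longrightarrow> finite A \<Longrightarrow> finite A' \<Longrightarrow> arcs (A \<union> A') B = arcs A B + arcs A' B"
  unfolding arcs_def by (simp add: sum.union_disjoint)

lemma arcs_Un_right:
  "B \<inter> B' = {} \<Longrightarrow> finite B \<Longrightarrow> finite B' \<Longrightarrow> arcs A (B \<union> B') = arcs A B + arcs A B'"
  unfolding arcs_def by (simp add: Int_Un_distrib card_Un_disjoint sum.distrib disjoint_iff)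

lemma arcs_le:
  assumes "finite A" "\<And>u. u \<in> A \<Longrightarrow> card (nbhd u \<inter> B) \<le> k"
  shows "arcs A B \<le> card A * k"
  unfolding arcs_def using sum_bounded_above[of A "\<lambda>u. card (nbhd u \<inter> B)" k] assms by simp

lemma arcs_le_card_mult: "finite A \<Longrightarrow> finite B \<Longrightarrow> arcs A B \<le> card A * card B"
  by (rule arcs_le) (simp_all add: card_mono)

lemma arcs_self_le: "finite A \<Longrightarrow> arcs A A \<le> card A * (card A - 1)"
proof (rule arcs_le)
  fix u assume "finite A" "u \<in> A"
  then have "card (nbhd u \<inter> A) \<le> card (A - {u})"
    using not_mem_nbhd_self by (intro card_mono) auto
  then show "card (nbhd u \<inter> A) \<le> card A - 1"
    using \<open>u \<in> A\<close> \<open>finite A\<close> by simp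
qed

lemma twice_card_edges: "2 * card E = arcs {0..<n} {0..<n}"
proof -
  have pairs: "finite {(u, v). {u, v} = e} \<and> card {(u, v). {u, v} = e} = 2" if "e \<in> E" for e
  proof -
    obtain x y where "x \<noteq> y" "e = {x, y}" using edge_doubleton \<open>e \<in> E\<close> by blast
    then have "{(u, v). {u, v} = e} = {(x, y), (y, x)}" by (auto simp: doubleton_eq_iff)
    then show ?thesis using \<open>x \<noteq> y\<close> by simp
  qed
  have "arcs {0..<n} {0..<n} = (\<Sum>u\<in>{0..<n}. card (nbhd u))"
    unfolding arcs_def using nbhd_subset by (simp add: Int_absorb2)
  also have "\<dots> = card (Sigma {0..<n} nbhd)"
    using finite_nbhd by (simp add: card_SigmaI)
  also have "Sigma {0..<n} nbhd = (\<Union>e\<in>E. {(u, v). {u, v} = e})"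
    using adjD by (auto simp: nbhd_def adj_def)
  also have "card \<dots> = (\<Sum>e\<in>E. card {(u, v). {u, v} = e})"
    using pairs by (intro card_UN_disjoint finite_edges) auto
  also have "\<dots> = 2 * card E"
    using pairs by simp
  finally show ?thesis by simp
qed

lemma matching_subset: "matching M \<Longrightarrow> M' \<subseteq> M \<Longrightarrow> matching M'"
  unfolding matching_def by blast

lemma finite_matching: "matching M \<Longrightarrow> finite M"
  unfolding matching_def using finite_edges by (auto intro: finite_subset)

lemma Union_matching_subset: "matching M \<Longrightarrow> \<Union>M \<subseteq> {0..<n}"
  unfolding matching_def using edges_subset by blast

lemma card_Union_matching: "matching M \<Longrightarrow> card (\<Union>M) \<le> 2 * card M"
proof -
  assume M: "matching M"
  have "card (\<Union>M) \<le> sum card M" by (rule card_Union_le_sum_card)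
  also have "\<dots> = sum (\<lambda>_. 2) M"
  proof (rule sum.cong[OF refl])
    fix e assume "e \<in> M"
    then have "e \<in> E" using M unfolding matching_def by blast
    then obtain u v where "u \<noteq> v" "e = {u, v}" using edge_doubleton by blast
    then show "card e = 2" by simp
  qed
  finally show ?thesis by simp
qed

lemma matching_empty: "matching {}"
  by (simp add: matching_def)

lemma matching_Un:
  assumes "matching M" "matching M'" "\<And>e e'. e \<in> M \<Longrightarrow> e' \<in> M' \<Longrightarrow> e \<inter> e' = {}"
  shows "matching (M \<union> M')"
  using assms unfolding matching_def by (metis Int_commute Un_iff Un_subset_iff)

lemma matching_insert:
  assumes "matching M" "adj x y" "x \<notin> \<Union>M" "y \<notin> \<Union>M"
  shows "matching (insert {x, y} M)" "card (insert {x, y} M) = Suc (card M)"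
proof -
  have "{x, y} \<in> E" using assms(2) by (simp add: adj_def)
  moreover have "{x, y} \<inter> e = {}" "e \<inter> {x, y} = {}" if "e \<in> M" for e
    using assms(3,4) that by blast+
  ultimately show "matching (insert {x, y} M)"
    using assms(1) unfolding matching_def by blast
  have "{x, y} \<notin> M" using assms(3) by blast
  then show "card (insert {x, y} M) = Suc (card M)"
    using finite_matching[OF assms(1)] by simp
qed

lemma matching_enumeration:
  assumes "matching M" "card M = k"
  obtains f where "inj_on f {0..<2 * k}" "\<And>i. i < k \<Longrightarrow> {f (2 * i), f (2 * i + 1)} \<in> M"
proof -
  obtain g where g: "bij_betw g {0..<k} M"
    using ex_bij_betw_nat_finite[OF finite_matching[OF assms(1)]] assms(2) by blast
  have gM: "g i \<in> M" "Min (g i) < Max (g i)" "{Min (g i), Max (g i)} = g i" if "i < k" for i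
  proof -
    show "g i \<in> M" using g that unfolding bij_betw_def by auto
    then have "g i \<in> E" using assms(1) unfolding matching_def by blast
    then obtain u v where "u \<noteq> v" "g i = {u, v}" using edge_doubleton by blast
    then show "Min (g i) < Max (g i)" "{Min (g i), Max (g i)} = g i"
      by (auto simp: min_def max_def)
  qed
  define f where "f i = (if even i then Min (g (i div 2)) else Max (g (i div 2)))" for i
  have f_mem: "f i \<in> g (i div 2)" if "i < 2 * k" for i
  proof -
    have "i div 2 < k" using that by simp
    then have "{Min (g (i div 2)), Max (g (i div 2))} = g (i div 2)" by (rule gM(3))
    then have "Min (g (i div 2)) \<in> g (i div 2)" "Max (g (i div 2)) \<in> g (i div 2)"
      by (metis insertI1, metis insertI1 insertI2)
    then show ?thesis by (simp add: f_def)
  qed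
  have same_edge: "i div 2 = j div 2" if "i < 2 * k" "j < 2 * k" "f i = f j" for i j
  proof (rule ccontr)
    assume "i div 2 \<noteq> j div 2"
    moreover have "i div 2 < k" "j div 2 < k" using that(1,2) by simp_all
    ultimately have "g (i div 2) \<noteq> g (j div 2)" "g (i div 2) \<in> M" "g (j div 2) \<in> M"
      using g unfolding bij_betw_def by (auto simp: inj_on_eq_iff)
    then have "g (i div 2) \<inter> g (j div 2) = {}"
      using assms(1) unfolding matching_def by blast
    then show False using f_mem[OF that(1)] f_mem[OF that(2)] that(3) by auto
  qed
  have "inj_on f {0..<2 * k}"
  proof (rule inj_onI)
    fix i j assume i: "i \<in> {0..<2 * k}" and j: "j \<in> {0..<2 * k}" and fij: "f i = f j"
    then have div: "i div 2 = j div 2" by (intro same_edge) auto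
    have "i div 2 < k" using i by simp
    then have "even i = even j"
      using gM(2)[of "i div 2"] fij div unfolding f_def by (auto split: if_splits)
    with div show "i = j" by presburger
  qed
  moreover have "{f (2 * i), f (2 * i + 1)} \<in> M" if "i < k" for i
    using gM[OF that] unfolding f_def by simp
  ultimately show ?thesis using that by blast
qed

lemma matching_embeds:
  assumes "matching M" "card M = k"
  shows "subgraph_of (matching_graph k) ({0..<n}, E)"
proof -
  obtain f where f: "inj_on f {0..<2 * k}" "\<And>i. i < k \<Longrightarrow> {f (2 * i), f (2 * i + 1)} \<in> M"
    using matching_enumeration[OF assms] by blast
  have fE: "{f (2 * i), f (2 * i + 1)} \<in> E" if "i < k" for i
    using f(2)[OF that] assms(1) unfolding matching_def by blast
  have "f j \<in> {0..<n}" if "j < 2 * k" for j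
  proof -
    have "j = 2 * (j div 2) \<or> j = 2 * (j div 2) + 1" by presburger
    then have "f j \<in> {f (2 * (j div 2)), f (2 * (j div 2) + 1)}" by auto
    moreover have "j div 2 < k" using that by simp
    ultimately show ?thesis using fE edges_subset by blast
  qed
  then show ?thesis unfolding subgraph_of_def matching_graph_def
    using f(1) fE by (intro exI[of _ f]) (auto simp: insert_commute)
qed
lemma complete_bipartite_embeds:
  assumes "A \<subseteq> {0..<n}" "B \<subseteq> {0..<n}" "card A = l" "card B = t" "\<forall>a\<in>A. \<forall>b\<in>B. adj a b"
  shows "subgraph_of (K_bip l t) ({0..<n}, E)"
proof -
  have "finite A" "finite B" using assms(1,2) finite_subset by auto
  then obtain gA gB where gA: "bij_betw gA {0..<l} A" and gB: "bij_betw gB {0..<t} B"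
    using ex_bij_betw_nat_finite assms(3,4) by metis
  define f where "f i = (if i < l then gA i else gB (i - l))" for i
  have fA: "bij_betw f {0..<l} A"
    using gA by (rule bij_betw_cong[THEN iffD1, rotated]) (simp add: f_def)
  have "bij_betw (\<lambda>i. i - l) {l..<l + t} {0..<t}"
    by (rule bij_betw_byWitness[where f' = "\<lambda>i. i + l"]) auto
  then have "bij_betw (gB \<circ> (\<lambda>i. i - l)) {l..<l + t} B"
    using gB by (rule bij_betw_trans)
  then have fB: "bij_betw f {l..<l + t} B"
    by (rule bij_betw_cong[THEN iffD1, rotated]) (simp add: f_def)
  have "A \<inter> B = {}" using assms(5) adjD(3) by blast
  then have "bij_betw f ({0..<l} \<union> {l..<l + t}) (A \<union> B)"
    using fA fB by (intro bij_betw_combine) auto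
  moreover have "{0..<l} \<union> {l..<l + t} = {0..<l + t}" by auto
  ultimately have f: "inj_on f {0..<l + t}" "f ` {0..<l + t} = A \<union> B"
    unfolding bij_betw_def by auto
  have "f ` e \<in> E" if e: "e \<in> snd (K_bip l t)" for e
  proof -
    obtain i j where ij: "i < l" "l \<le> j" "j < l + t" "e = {i, j}"
      using e unfolding K_bip_def by auto
    then have "f i \<in> A" "f j \<in> B"
      using fA fB unfolding bij_betw_def by auto
    then show ?thesis using assms(5) ij(4) unfolding adj_def by auto
  qed
  then show ?thesis
    unfolding subgraph_of_def using f assms(1,2) by (intro exI[of _ f]) (auto simp: K_bip_def)
qed

end

section \<open>Turan numbers\<close>

lemma finite_ex_set:
  fixes m :: nat
  shows "finite {card E | E. simple_graph ({0..<m}, E) \<and> (\<forall>H\<in>F. \<not> subgraph_of H ({0..<m}, E))}"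
proof (rule finite_subset)
  show "{card E | E. simple_graph ({0..<m}, E) \<and> (\<forall>H\<in>F. \<not> subgraph_of H ({0..<m}, E))}
      \<subseteq> card ` Pow (Pow {0..<m})"
  proof
    fix x assume "x \<in> {card E | E. simple_graph ({0..<m}, E) \<and> (\<forall>H\<in>F. \<not> subgraph_of H ({0..<m}, E))}"
    then obtain E where "x = card E" "simple_graph ({0..<m}, E)" by blast
    moreover from this have "E \<subseteq> Pow {0..<m}" unfolding simple_graph_def by auto
    ultimately show "x \<in> card ` Pow (Pow {0..<m})" by blast
  qed
qed (intro finite_imageI, simp add: finite_Pow_iff)

lemma card_le_ex:
  assumes "simple_graph ({0..<m}, E)" "\<forall>H\<in>F. \<not> subgraph_of H ({0..<m}, E)"
  shows "card E \<le> ex m F"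
  unfolding ex_def by (rule Max_ge[OF finite_ex_set]) (use assms in blast)

lemma ex_attained:
  assumes "\<forall>H\<in>F. snd H \<noteq> {}"
  obtains E where "simple_graph ({0..<m}, E)" "\<forall>H\<in>F. \<not> subgraph_of H ({0..<m}, E)"
    "ex m F = card E"
proof -
  let ?S = "{card E | E. simple_graph ({0..<m}, E) \<and> (\<forall>H\<in>F. \<not> subgraph_of H ({0..<m}, E))}"
  have "simple_graph ({0..<m}, {})" by (simp add: simple_graph_def)
  moreover have "\<forall>H\<in>F. \<not> subgraph_of H ({0..<m}, {})"
    using assms unfolding subgraph_of_def by fastforce
  ultimately have "?S \<noteq> {}" by blast
  then have "Max ?S \<in> ?S" using finite_ex_set by (rule Max_in[rotated])
  then show ?thesis using that unfolding ex_def by blast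
qed

lemma choose_two_le_ex_Kbip:
  assumes "m < l + t"
  shows "m choose 2 \<le> ex m {K_bip l t}"
proof -
  define K where "K = {e. e \<subseteq> {0..<m} \<and> card e = 2}"
  have "simple_graph ({0..<m}, K)"
    unfolding simple_graph_def K_def by (force simp: card_2_iff)
  moreover have "\<not> subgraph_of (K_bip l t) ({0..<m}, K)"
  proof
    assume "subgraph_of (K_bip l t) ({0..<m}, K)"
    then obtain f where "inj_on f {0..<l + t}" "f ` {0..<l + t} \<subseteq> {0..<m}"
      unfolding subgraph_of_def K_bip_def by auto
    then have "card {0..<l + t} \<le> card {0..<m}" by (intro card_inj_on_le) simp_all
    then show False using assms by simp
  qed
  ultimately have "card K \<le> ex m {K_bip l t}" by (intro card_le_ex) simp_all
  moreover have "card K = m choose 2" unfolding K_def using n_subsets[of "{0..<m}" 2] by simp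
  ultimately show ?thesis by simp
qed

section \<open>Graphs without K_{l,t} or without M_{s+1}\<close>

locale Kbip_free_graph = nat_graph +
  fixes l t :: nat
  assumes Kbip_free: "\<not> subgraph_of (K_bip l t) ({0..<n}, E)"
begin

lemma card_common_nbhd_le:
  assumes "A \<subseteq> {0..<n}" "card A = l"
  shows "card {v \<in> {0..<n}. A \<subseteq> nbhd v} \<le> t - 1"
proof (rule ccontr)
  assume "\<not> ?thesis"
  then have "t \<le> card {v \<in> {0..<n}. A \<subseteq> nbhd v}" by simp
  then obtain B where B: "B \<subseteq> {v \<in> {0..<n}. A \<subseteq> nbhd v}" "card B = t"
    by (rule obtain_subset_with_card_n)
  have "\<forall>a\<in>A. \<forall>b\<in>B. adj a b"
  proof (intro ballI)
    fix a b assume "a \<in> A" "b \<in> B"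
    then have "a \<in> nbhd b" using B(1) by blast
    then have "adj b a" by (simp add: mem_nbhd_iff)
    then show "adj a b" by (metis adj_commute)
  qed
  moreover have "B \<subseteq> {0..<n}" using B(1) by blast
  ultimately show False
    using complete_bipartite_embeds[OF assms(1) _ assms(2) B(2)] Kbip_free by blast
qed

text \<open>Double counting pairs (v, A) with A an l-subset of S inside the neighbourhood of v.\<close>

lemma sum_choose_nbhd_le:
  assumes "S \<subseteq> {0..<n}"
  shows "(\<Sum>v\<in>{0..<n}. card (nbhd v \<inter> S) choose l) \<le> (t - 1) * (card S choose l)"
proof -
  have finS: "finite S" using assms finite_subset by blast
  define Ls where "Ls = {A. A \<subseteq> S \<and> card A = l}"
  have finLs: "finite Ls" unfolding Ls_def using finS by simp
  have "(\<Sum>v\<in>{0..<n}. card (nbhd v \<inter> S) choose l) = (\<Sum>v\<in>{0..<n}. card {A\<in>Ls. A \<subseteq> nbhd v})"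
  proof (rule sum.cong[OF refl])
    fix v
    have "{A\<in>Ls. A \<subseteq> nbhd v} = {A. A \<subseteq> nbhd v \<inter> S \<and> card A = l}" unfolding Ls_def by auto
    then show "card (nbhd v \<inter> S) choose l = card {A\<in>Ls. A \<subseteq> nbhd v}"
      using n_subsets[of "nbhd v \<inter> S" l] finS by simp
  qed
  also have "\<dots> = (\<Sum>v\<in>{0..<n}. \<Sum>A\<in>Ls. if A \<subseteq> nbhd v then 1 else 0)"
    using finLs by (simp add: sum.inter_filter[symmetric])
  also have "\<dots> = (\<Sum>A\<in>Ls. \<Sum>v\<in>{0..<n}. if A \<subseteq> nbhd v then 1 else 0)"
    by (rule sum.swap)
  also have "\<dots> = (\<Sum>A\<in>Ls. card {v\<in>{0..<n}. A \<subseteq> nbhd v})"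
    by (simp add: sum.inter_filter[symmetric])
  also have "\<dots> \<le> (\<Sum>A\<in>Ls. t - 1)"
  proof (rule sum_mono)
    fix A assume "A \<in> Ls"
    then show "card {v\<in>{0..<n}. A \<subseteq> nbhd v} \<le> t - 1"
      using assms unfolding Ls_def by (intro card_common_nbhd_le) auto
  qed
  also have "\<dots> = (t - 1) * (card S choose l)"
    using n_subsets[OF finS, of l] unfolding Ls_def by simp
  finally show ?thesis .
qed

lemma arcs_le_choose:
  assumes "S \<subseteq> {0..<n}" "W \<subseteq> {0..<n}" "0 < l"
  shows "arcs W S \<le> (l - 1) * card W + (t - 1) * (card S choose l)"
proof -
  have "arcs W S \<le> (\<Sum>v\<in>W. (l - 1) + (card (nbhd v \<inter> S) choose l))"
    unfolding arcs_def by (rule sum_mono) (rule le_choose_plus[OF assms(3)])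
  also have "\<dots> = (l - 1) * card W + (\<Sum>v\<in>W. card (nbhd v \<inter> S) choose l)"
    by (simp add: sum.distrib)
  also have "(\<Sum>v\<in>W. card (nbhd v \<inter> S) choose l) \<le> (\<Sum>v\<in>{0..<n}. card (nbhd v \<inter> S) choose l)"
    by (rule sum_mono2) (use assms in auto)
  also have "\<dots> \<le> (t - 1) * (card S choose l)"
    by (rule sum_choose_nbhd_le[OF assms(1)])
  finally show ?thesis by simp
qed

end

locale matching_bounded_graph = nat_graph +
  fixes s :: nat
  assumes matching_free: "\<not> subgraph_of (matching_graph (s + 1)) ({0..<n}, E)"
begin

lemma card_matching_le: "matching M \<Longrightarrow> card M \<le> s"
proof (rule ccontr)
  assume "matching M" "\<not> card M \<le> s"
  then obtain M' where "M' \<subseteq> M" "card M' = s + 1"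
    using obtain_subset_with_card_n[of "s + 1" M] by auto
  then show False
    using matching_embeds matching_subset \<open>matching M\<close> matching_free by blast
qed

definition big :: "nat set" where
  "big = {v \<in> {0..<n}. 3 * s \<le> card (nbhd v)}"

lemma finite_big: "finite big"
  unfolding big_def by simp

lemma greedy_matching:
  assumes "2 \<le> s" "finite X" "X \<subseteq> big" "matching M" "\<Union>M \<inter> X = {}" "card X + card M \<le> s + 1"
  shows "\<exists>M'. matching M' \<and> card M' = card X + card M"
  using assms(2-6)
proof (induction X arbitrary: M rule: finite_induct)
  case empty
  then show ?case by auto
next
  case (insert x X)
  have "card (\<Union>M \<union> insert x X) \<le> card (\<Union>M) + card (insert x X)"
    by (rule card_Un_le)
  also have "\<dots> < 3 * s"
  proof -
    have "card (\<Union>M) \<le> 2 * card M" by (rule card_Union_matching[OF insert.prems(2)])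
    moreover have "card (insert x X) = Suc (card X)" using insert.hyps by simp
    ultimately show ?thesis using insert.prems(4) assms(1) by linarith
  qed
  also have "3 * s \<le> card (nbhd x)"
    using insert.prems(1) by (simp add: big_def)
  finally have "card (\<Union>M \<union> insert x X) < card (nbhd x)" .
  moreover have "finite (\<Union>M)"
    using Union_matching_subset[OF insert.prems(2)] by (rule finite_subset) simp
  then have "finite (\<Union>M \<union> insert x X)" using insert.hyps(1) by simp
  ultimately have "\<not> nbhd x \<subseteq> \<Union>M \<union> insert x X" using card_mono leD by metis
  then obtain y where "y \<in> nbhd x" "y \<notin> \<Union>M" "y \<notin> insert x X" by blast
  then have y: "adj x y" "y \<notin> \<Union>M" "y \<notin> insert x X" by (simp_all add: mem_nbhd_iff)
  have "x \<notin> \<Union>M" using insert.prems(3) by blast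
  note M' = matching_insert[OF insert.prems(2) y(1) this y(2)]
  have "X \<subseteq> big" using insert.prems(1) by simp
  moreover have "\<Union>(insert {x, y} M) \<inter> X = {}"
    using insert.prems(3) y(3) insert.hyps(2) by auto
  moreover have "card X + card (insert {x, y} M) \<le> s + 1"
    using insert.prems(4) insert.hyps M'(2) by simp
  ultimately obtain M'' where "matching M''" "card M'' = card X + card (insert {x, y} M)"
    using insert.IH M'(1) by blast
  then show ?case using M'(2) insert.hyps by auto
qed

lemma card_matching_plus_big:
  assumes "2 \<le> s" "matching M" "\<Union>M \<inter> big = {}"
  shows "card M + card big \<le> s"
proof (rule ccontr)
  assume less: "\<not> ?thesis"
  obtain X where X: "X \<subseteq> big" "card X = min (card big) (s + 1)" "finite X"
    by (rule obtain_subset_with_card_n[of "min (card big) (s + 1)" big]) simp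
  obtain M0 where M0: "M0 \<subseteq> M" "card M0 = s + 1 - card X"
    by (rule obtain_subset_with_card_n[of "s + 1 - card X" M]) (use X(2) less in auto)
  have "matching M0" using assms(2) M0(1) by (rule matching_subset)
  moreover have "\<Union>M0 \<inter> X = {}" using assms(3) M0(1) X(1) by blast
  moreover have "card X + card M0 = s + 1" using X(2) M0(2) by simp
  ultimately obtain M' where "matching M'" "card M' = s + 1"
    using greedy_matching[OF assms(1) X(3) X(1)] by (metis order_refl)
  then show False using card_matching_le[of M'] by simp
qed

end

locale KM_free_graph = Kbip_free_graph + matching_bounded_graph

section \<open>A maximum matching avoiding the big vertices\<close>

locale big_avoiding_max_matching = KM_free_graph +
  fixes M :: "nat set set"
  assumes matching_M: "matching M"
    and M_avoids_big: "\<Union>M \<inter> big = {}"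
    and M_maximum: "\<And>M'. matching M' \<Longrightarrow> \<Union>M' \<inter> big = {} \<Longrightarrow> card M' \<le> card M"
begin

definition unmatched :: "nat set" where
  "unmatched = {0..<n} - big - \<Union>M"

definition heavy :: "nat \<Rightarrow> bool" where
  "heavy x \<longleftrightarrow> 2 \<le> card (nbhd x \<inter> unmatched)"

definition heavy_ends :: "nat set" where
  "heavy_ends = {x \<in> \<Union>M. heavy x}"

definition heavy_partners :: "nat set" where
  "heavy_partners = {w. \<exists>u. heavy u \<and> {u, w} \<in> M}"

definition light_ends :: "nat set" where
  "light_ends = \<Union>M - heavy_ends - heavy_partners"

definition heavy_edges :: "nat set set" where
  "heavy_edges = {e \<in> M. \<exists>u\<in>e. heavy u}"

definition light_edges :: "nat set set" where
  "light_edges = M - heavy_edges"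

lemma M_edge: "e \<in> M \<Longrightarrow> e \<in> E"
  using matching_M unfolding matching_def by blast

lemma M_disjoint: "e \<in> M \<Longrightarrow> e' \<in> M \<Longrightarrow> e \<noteq> e' \<Longrightarrow> e \<inter> e' = {}"
  using matching_M unfolding matching_def by blast

lemma M_edge_unique: "x \<in> e \<Longrightarrow> e \<in> M \<Longrightarrow> x \<in> e' \<Longrightarrow> e' \<in> M \<Longrightarrow> e = e'"
  using M_disjoint by blast

lemma M_edge_adj: "{u, w} \<in> M \<Longrightarrow> adj u w"
  using M_edge by (simp add: adj_def)

lemma M_edge_neq: "{u, w} \<in> M \<Longrightarrow> u \<noteq> w"
  using M_edge_adj adjD(3) by blast

lemma finite_M: "finite M"
  using matching_M by (rule finite_matching)

lemma matched_not_unmatched: "x \<in> \<Union>M \<Longrightarrow> x \<notin> unmatched"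
  unfolding unmatched_def by blast

text \<open>Otherwise (M - R) \<union> A would be a larger matching avoiding the big vertices.\<close>

lemma card_le_exchanged:
  assumes A: "matching A" and R: "R \<subseteq> M" and AV: "\<Union>A \<subseteq> \<Union>R \<union> unmatched"
  shows "card A \<le> card R"
proof -
  have disjoint: "e \<inter> a = {}" if e: "e \<in> M - R" and a: "a \<in> A" for e a
  proof -
    have "e \<inter> \<Union>R = {}" using M_disjoint e R by blast
    moreover have "e \<inter> unmatched = {}" using e unfolding unmatched_def by blast
    ultimately show ?thesis using AV a by blast
  qed
  have "matching (M - R)" using matching_M by (rule matching_subset) blast
  then have "matching ((M - R) \<union> A)" using A disjoint by (rule matching_Un)
  moreover have "\<Union>((M - R) \<union> A) \<inter> big = {}"
    using M_avoids_big AV R unfolding unmatched_def by blast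
  ultimately have "card ((M - R) \<union> A) \<le> card M" by (rule M_maximum)
  moreover have "a \<noteq> {}" if "a \<in> A" for a
    using that A edge_doubleton unfolding matching_def by blast
  then have "(M - R) \<inter> A = {}" using disjoint by blast
  then have "card ((M - R) \<union> A) = card (M - R) + card A"
    using finite_M finite_matching[OF A] by (simp add: card_Un_disjoint)
  moreover have "card (M - R) = card M - card R" "card R \<le> card M"
    using R finite_M by (simp_all add: card_Diff_subset finite_subset card_mono)
  ultimately show ?thesis by linarith
qed

lemma unmatched_nonadj:
  assumes "x \<in> unmatched" "y \<in> unmatched"
  shows "\<not> adj x y"
proof
  assume "adj x y"
  then have "matching {{x, y}}" "card {{x, y}} = 1"
    using matching_insert[OF matching_empty] by simp_all
  moreover have "\<Union>{{x, y}} \<subseteq> \<Union>{} \<union> unmatched" using assms by simp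
  ultimately show False using card_le_exchanged[of "{{x, y}}" "{}"] by simp
qed

lemma heavy_other_nbr:
  assumes "heavy u"
  obtains x where "x \<in> nbhd u" "x \<in> unmatched" "x \<noteq> x'"
proof -
  have "\<not> nbhd u \<inter> unmatched \<subseteq> {x'}"
  proof
    assume "nbhd u \<inter> unmatched \<subseteq> {x'}"
    then have "card (nbhd u \<inter> unmatched) \<le> card {x'}" by (rule card_mono[rotated]) simp
    then show False using assms unfolding heavy_def by simp
  qed
  then show ?thesis using that by blast
qed

lemma heavy_nbhd_nonempty: "heavy u \<Longrightarrow> nbhd u \<inter> unmatched \<noteq> {}"
  unfolding heavy_def by auto

text \<open>Otherwise the edges u x and v x' could replace the edge u v.\<close>

lemma heavy_partner_nbhd:
  assumes uv: "{u, v} \<in> M" and "heavy u"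
  shows "nbhd v \<inter> unmatched = {}"
proof (rule ccontr)
  assume "nbhd v \<inter> unmatched \<noteq> {}"
  then obtain x' where x': "adj v x'" "x' \<in> unmatched" by (auto simp: mem_nbhd_iff)
  obtain x where x: "adj u x" "x \<in> unmatched" "x \<noteq> x'"
    using heavy_other_nbr[OF \<open>heavy u\<close>] by (auto simp: mem_nbhd_iff)
  have "u \<notin> unmatched" "v \<notin> unmatched" "u \<noteq> v"
    using matched_not_unmatched uv M_edge_neq by blast+
  then have "u \<noteq> x'" "x \<noteq> v" "u \<noteq> v" using x x' by blast+
  from matching_insert[OF matching_empty x'(1)]
  have "matching {{v, x'}}" "card {{v, x'}} = 1" by simp_all
  moreover have "u \<notin> \<Union>{{v, x'}}" "x \<notin> \<Union>{{v, x'}}"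
    using \<open>u \<noteq> x'\<close> \<open>x \<noteq> v\<close> \<open>u \<noteq> v\<close> x(3) by auto
  ultimately have "matching {{u, x}, {v, x'}}" "card {{u, x}, {v, x'}} = 2"
    using matching_insert[of "{{v, x'}}" u x] x(1) by simp_all
  moreover have "\<Union>{{u, x}, {v, x'}} \<subseteq> \<Union>{{u, v}} \<union> unmatched" using x x' by auto
  moreover have "{{u, v}} \<subseteq> M" using uv by simp
  ultimately show False using card_le_exchanged[of "{{u, x}, {v, x'}}" "{{u, v}}"] by simp
qed

text \<open>Otherwise the edges u1 x, w1 w2 and u2 y could replace the edges u1 w1 and u2 w2.\<close>

lemma heavy_edges_partners_nonadj:
  assumes e1: "{u1, w1} \<in> M" and e2: "{u2, w2} \<in> M" and ne: "{u1, w1} \<noteq> {u2, w2}"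
    and "heavy u1" "heavy u2"
  shows "\<not> adj w1 w2"
proof
  assume w: "adj w1 w2"
  obtain x where x: "adj u1 x" "x \<in> unmatched"
    using heavy_other_nbr[OF \<open>heavy u1\<close>] by (auto simp: mem_nbhd_iff)
  obtain y where y: "adj u2 y" "y \<in> unmatched" "y \<noteq> x"
    using heavy_other_nbr[OF \<open>heavy u2\<close>] by (auto simp: mem_nbhd_iff)
  have "u1 \<notin> unmatched" "w1 \<notin> unmatched" "u2 \<notin> unmatched" "w2 \<notin> unmatched"
    using matched_not_unmatched e1 e2 by blast+
  then have "x \<notin> {u1, w1, u2, w2}" "y \<notin> {u1, w1, u2, w2}" using x y by auto
  moreover have "{u1, w1} \<inter> {u2, w2} = {}" using M_disjoint[OF e1 e2 ne] .
  moreover have "u1 \<noteq> w1" "u2 \<noteq> w2" using M_edge_neq e1 e2 by blast+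
  ultimately have fresh: "w1 \<notin> \<Union>{{u2, y}}" "w2 \<notin> \<Union>{{u2, y}}"
    "u1 \<notin> \<Union>{{w1, w2}, {u2, y}}" "x \<notin> \<Union>{{w1, w2}, {u2, y}}"
    using y(3) by auto
  from matching_insert[OF matching_empty y(1)]
  have "matching {{u2, y}}" "card {{u2, y}} = 1" by simp_all
  with matching_insert[OF _ w fresh(1,2)]
  have "matching {{w1, w2}, {u2, y}}" "card {{w1, w2}, {u2, y}} = 2" by simp_all
  with matching_insert[OF _ x(1) fresh(3,4)]
  have "matching {{u1, x}, {w1, w2}, {u2, y}}" "card {{u1, x}, {w1, w2}, {u2, y}} = 3" by simp_all
  moreover have "\<Union>{{u1, x}, {w1, w2}, {u2, y}} \<subseteq> \<Union>{{u1, w1}, {u2, w2}} \<union> unmatched"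
    using x y by auto
  moreover have "{{u1, w1}, {u2, w2}} \<subseteq> M" "card {{u1, w1}, {u2, w2}} = 2"
    using e1 e2 ne by simp_all
  ultimately show False
    using card_le_exchanged[of "{{u1, x}, {w1, w2}, {u2, y}}" "{{u1, w1}, {u2, w2}}"] by simp
qed

lemma heavy_ends_partners_disjoint: "heavy_ends \<inter> heavy_partners = {}"
proof -
  have False if "heavy w" "heavy u" "{u, w} \<in> M" for u w
    using heavy_partner_nbhd[OF that(3,2)] heavy_nbhd_nonempty[OF that(1)] by simp
  then show ?thesis unfolding heavy_ends_def heavy_partners_def by blast
qed

lemma heavy_partners_nbhd: "w \<in> heavy_partners \<Longrightarrow> nbhd w \<inter> unmatched = {}"
  unfolding heavy_partners_def using heavy_partner_nbhd by blast

lemma heavy_partners_nonadj: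
  assumes "w1 \<in> heavy_partners" "w2 \<in> heavy_partners"
  shows "\<not> adj w1 w2"
proof
  assume w: "adj w1 w2"
  obtain u1 u2 where u: "heavy u1" "{u1, w1} \<in> M" "heavy u2" "{u2, w2} \<in> M"
    using assms unfolding heavy_partners_def by blast
  show False
  proof (cases "{u1, w1} = {u2, w2}")
    case True
    have "w1 \<noteq> w2" using w adjD(3) by blast
    then have "w1 = u2" using True by (auto simp: doubleton_eq_iff)
    then have "w1 \<in> heavy_ends" using u(3,4) unfolding heavy_ends_def by blast
    then show False using heavy_ends_partners_disjoint assms(1) by blast
  next
    case False
    then show False using heavy_edges_partners_nonadj u w by blast
  qed
qed

lemma light_ends_nbhd: "b \<in> light_ends \<Longrightarrow> card (nbhd b \<inter> unmatched) \<le> 1"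
  unfolding light_ends_def heavy_ends_def heavy_def by auto

lemma light_ends_subset: "light_ends \<subseteq> \<Union>light_edges"
proof
  fix b assume b: "b \<in> light_ends"
  then obtain e where e: "e \<in> M" "b \<in> e" unfolding light_ends_def by blast
  have "e \<notin> heavy_edges"
  proof
    assume "e \<in> heavy_edges"
    then obtain u where u: "u \<in> e" "heavy u" unfolding heavy_edges_def by blast
    have "u \<noteq> b" using b u(2) e unfolding light_ends_def heavy_ends_def by blast
    then have "e = {u, b}" using edge_eq[OF M_edge[OF e(1)] u(1) e(2)] by simp
    then have "b \<in> heavy_partners" using e u unfolding heavy_partners_def by blast
    then show False using b unfolding light_ends_def by blast
  qed
  then show "b \<in> \<Union>light_edges" using e unfolding light_edges_def by blast
qed

definition edge_of :: "nat \<Rightarrow> nat set" where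
  "edge_of x = (SOME e. e \<in> M \<and> x \<in> e)"

lemma edge_of_mem: "x \<in> \<Union>M \<Longrightarrow> edge_of x \<in> M \<and> x \<in> edge_of x"
  unfolding edge_of_def by (rule someI_ex) blast

lemma edge_of_eq: "x \<in> e \<Longrightarrow> e \<in> M \<Longrightarrow> edge_of x = e"
  using edge_of_mem M_edge_unique by blast

lemma finite_heavy_edges: "finite heavy_edges"
  using finite_M unfolding heavy_edges_def by simp

lemma card_heavy_ends_le: "card heavy_ends \<le> card heavy_edges"
proof (rule card_inj_on_le[OF _ _ finite_heavy_edges])
  show "inj_on edge_of heavy_ends"
  proof (rule inj_onI)
    fix x y assume x: "x \<in> heavy_ends" and y: "y \<in> heavy_ends" and eq: "edge_of x = edge_of y"
    show "x = y"
    proof (rule ccontr)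
      assume "x \<noteq> y"
      have "edge_of x \<in> M" "x \<in> edge_of x" "y \<in> edge_of x"
        using edge_of_mem[of x] edge_of_mem[of y] x y eq unfolding heavy_ends_def by auto
      then have "{x, y} \<in> M" using edge_eq M_edge \<open>x \<noteq> y\<close> by metis
      then have "y \<in> heavy_partners" using x unfolding heavy_ends_def heavy_partners_def by blast
      then show False using heavy_ends_partners_disjoint y by blast
    qed
  qed
  show "edge_of ` heavy_ends \<subseteq> heavy_edges"
    using edge_of_mem unfolding heavy_ends_def heavy_edges_def by blast
qed

lemma card_heavy_partners_le: "card heavy_partners \<le> card heavy_edges"
proof (rule card_inj_on_le[OF _ _ finite_heavy_edges])
  have mate: "edge_of w = {u, w}" if "heavy u" "{u, w} \<in> M" for u w
    using that by (intro edge_of_eq) auto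
  show "inj_on edge_of heavy_partners"
  proof (rule inj_onI)
    fix x y assume x: "x \<in> heavy_partners" and y: "y \<in> heavy_partners" and eq: "edge_of x = edge_of y"
    obtain u v where "heavy u" "{u, x} \<in> M" "heavy v" "{v, y} \<in> M"
      using x y unfolding heavy_partners_def by blast
    then have "{u, x} = {v, y}" using mate eq by metis
    then have "x = y \<or> x \<in> heavy_ends"
      using \<open>heavy v\<close> \<open>{v, y} \<in> M\<close> unfolding heavy_ends_def by (auto simp: doubleton_eq_iff)
    then show "x = y" using x heavy_ends_partners_disjoint by blast
  qed
  show "edge_of ` heavy_partners \<subseteq> heavy_edges"
    using mate unfolding heavy_partners_def heavy_edges_def by auto
qed

lemma card_light_ends_le: "card light_ends \<le> 2 * card light_edges"
proof -
  have "matching light_edges" using matching_M unfolding light_edges_def by (rule matching_subset) blast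
  then have "card (\<Union>light_edges) \<le> 2 * card light_edges" by (rule card_Union_matching)
  moreover have "finite (\<Union>light_edges)"
    using Union_matching_subset[OF \<open>matching light_edges\<close>] by (rule finite_subset) simp
  ultimately show ?thesis using light_ends_subset card_mono by (metis le_trans)
qed

lemma card_heavy_plus_light_edges: "card heavy_edges + card light_edges = card M"
proof -
  have "heavy_edges \<subseteq> M" unfolding heavy_edges_def by blast
  then have "card light_edges = card M - card heavy_edges" "card heavy_edges \<le> card M"
    unfolding light_edges_def using finite_M by (simp_all add: card_Diff_subset finite_subset card_mono)
  then show ?thesis by simp
qed

definition core :: "nat set" where
  "core = big \<union> heavy_ends"

definition rest :: "nat set" where
  "rest = {0..<n} - core"

definition indep_part :: "nat set" where
  "indep_part = heavy_partners \<union> unmatched"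

lemma core_subset: "core \<subseteq> {0..<n}"
  using Union_matching_subset[OF matching_M] unfolding core_def big_def heavy_ends_def by blast

lemma finite_core: "finite core"
  using core_subset by (rule finite_subset) simp

lemma finite_rest: "finite rest"
  unfolding rest_def by simp

lemma rest_eq: "rest = light_ends \<union> indep_part"
  using Union_matching_subset[OF matching_M] M_avoids_big heavy_ends_partners_disjoint
  unfolding rest_def core_def light_ends_def indep_part_def unmatched_def heavy_partners_def
    heavy_ends_def by blast

lemma light_ends_indep_part_disjoint: "light_ends \<inter> indep_part = {}"
  unfolding light_ends_def indep_part_def unmatched_def by blast

lemma card_core: "card core = card big + card heavy_ends"
proof -
  have "big \<inter> heavy_ends = {}" using M_avoids_big unfolding heavy_ends_def by blast
  moreover have "finite heavy_ends" using finite_core unfolding core_def by simp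
  ultimately show ?thesis unfolding core_def using finite_big by (simp add: card_Un_disjoint)
qed

lemma card_rest: "card rest = n - card core"
  unfolding rest_def using core_subset finite_core by (simp add: card_Diff_subset)

lemma indep_part_nonadj:
  assumes "u \<in> indep_part" "v \<in> indep_part"
  shows "\<not> adj u v"
proof
  assume uv: "adj u v"
  have "\<not> (adj w x \<and> x \<in> unmatched)" if "w \<in> heavy_partners" for w x
    using heavy_partners_nbhd[OF that] by (auto simp: mem_nbhd_iff)
  then show False
    using assms uv heavy_partners_nonadj unmatched_nonadj adj_commute unfolding indep_part_def by blast
qed

lemma arcs_indep_part: "arcs indep_part indep_part = 0"
proof -
  have "nbhd u \<inter> indep_part = {}" if "u \<in> indep_part" for u
    using indep_part_nonadj that by (auto simp: mem_nbhd_iff)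
  then show ?thesis unfolding arcs_def by simp
qed

lemma twice_card_edges_split:
  "2 * card E = arcs core core + 2 * arcs rest core + arcs rest rest"
  "arcs {0..<n} core = arcs core core + arcs rest core"
proof -
  have V: "{0..<n} = core \<union> rest" and disj: "core \<inter> rest = {}"
    unfolding rest_def using core_subset by blast+
  show "arcs {0..<n} core = arcs core core + arcs rest core"
    unfolding V using arcs_Un_left[OF disj finite_core finite_rest] by simp
  have "arcs {0..<n} {0..<n} = arcs core core + arcs core rest + (arcs rest core + arcs rest rest)"
    unfolding V using arcs_Un_left[OF disj finite_core finite_rest] arcs_Un_right[OF disj finite_core finite_rest]
    by simp
  then show "2 * card E = arcs core core + 2 * arcs rest core + arcs rest rest"
    using twice_card_edges arcs_commute[OF finite_core finite_rest] by simp
qed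

lemma arcs_rest_core_le: "arcs rest core \<le> card rest * card big + card heavy_ends * (3 * s - 1)"
proof -
  have disj: "big \<inter> heavy_ends = {}" using M_avoids_big unfolding heavy_ends_def by blast
  have fin: "finite heavy_ends" using finite_core unfolding core_def by simp
  have "arcs rest big \<le> card rest * card big"
    using finite_rest finite_big by (rule arcs_le_card_mult)
  moreover have "arcs heavy_ends rest \<le> card heavy_ends * (3 * s - 1)"
  proof (rule arcs_le[OF fin])
    fix u assume "u \<in> heavy_ends"
    then have "u \<notin> big" "u < n"
      using M_avoids_big Union_matching_subset[OF matching_M] unfolding heavy_ends_def by auto
    then have "card (nbhd u) < 3 * s" unfolding big_def by auto
    moreover have "card (nbhd u \<inter> rest) \<le> card (nbhd u)" using finite_nbhd by (simp add: card_mono)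
    ultimately show "card (nbhd u \<inter> rest) \<le> 3 * s - 1" by linarith
  qed
  ultimately show ?thesis
    unfolding core_def arcs_Un_right[OF disj finite_big fin] arcs_commute[OF fin finite_rest]
    by linarith
qed

lemma arcs_rest_rest_le:
  "arcs rest rest \<le> 2 * (card light_edges * (2 * card light_edges + 2 * card heavy_edges + 1))"
proof -
  define b where "b = card light_ends"
  have fB: "finite light_ends" and fR: "finite indep_part"
    using finite_rest unfolding rest_eq by simp_all
  note disj = light_ends_indep_part_disjoint
  have "arcs rest rest = arcs light_ends light_ends + 2 * arcs light_ends indep_part"
    unfolding rest_eq arcs_Un_left[OF disj fB fR] arcs_Un_right[OF disj fB fR]
      arcs_commute[OF fR fB] arcs_indep_part
    by simp
  moreover have "arcs light_ends light_ends \<le> b * (b - 1)"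
    unfolding b_def using fB by (rule arcs_self_le)
  moreover have "arcs light_ends indep_part \<le> b * (card heavy_partners + 1)"
    unfolding b_def
  proof (rule arcs_le[OF fB])
    fix u assume "u \<in> light_ends"
    have "card (nbhd u \<inter> indep_part) \<le> card (heavy_partners \<union> (nbhd u \<inter> unmatched))"
      unfolding indep_part_def using finite_rest finite_nbhd
      by (intro card_mono) (auto simp: rest_eq indep_part_def)
    also have "\<dots> \<le> card heavy_partners + 1"
      using card_Un_le light_ends_nbhd[OF \<open>u \<in> light_ends\<close>] by (metis add_le_mono le_refl order_trans)
    finally show "card (nbhd u \<inter> indep_part) \<le> card heavy_partners + 1" .
  qed
  moreover define q h where "q = card light_edges" and "h = card heavy_edges"
  have "b \<le> 2 * q" unfolding b_def q_def by (rule card_light_ends_le)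
  then have "b * (b - 1) \<le> (2 * q) * (2 * q - 1)" "b * (card heavy_partners + 1) \<le> (2 * q) * (h + 1)"
    using card_heavy_partners_le unfolding h_def by (intro mult_le_mono; simp)+
  moreover have "(2 * q) * (2 * q - 1) + 2 * ((2 * q) * (h + 1)) = 2 * (q * (2 * q + 2 * h + 1))"
    by (cases q) (simp_all add: algebra_simps)
  ultimately show ?thesis unfolding q_def h_def by linarith
qed

end

section \<open>Counting the edges\<close>

context big_avoiding_max_matching
begin

lemma card_big_heavy_light_le:
  "2 \<le> s \<Longrightarrow> card big + card heavy_edges + card light_edges \<le> s"
  using card_matching_plus_big[OF _ matching_M M_avoids_big] card_heavy_plus_light_edges by simp

lemma twice_card_edges_le_arcs:
  "2 * card E \<le> arcs core core + 2 * arcs rest core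
     + 2 * (card light_edges * (2 * card light_edges + 2 * card heavy_edges + 1))"
  using twice_card_edges_split(1) arcs_rest_rest_le by linarith

text \<open>With at most l - 2 big vertices every vertex of the rest has at most l - 2 neighbours among
  them, and everything else is O(s^2).\<close>

lemma few_big_bound:
  assumes "3 \<le> l" "l < s" "card big + 2 \<le> l" and n: "2 * ((3 * s) choose 2) \<le> n"
  shows "2 * card E + l * (l - 1) \<le> 2 * ((l - 1) * n)"
proof -
  define a where "a = card big"
  define h1 where "h1 = card heavy_ends"
  define h where "h = card heavy_edges"
  define q where "q = card light_edges"
  define p where "p = card core"
  define w where "w = card rest"
  have ahq: "a + h + q \<le> s" using card_big_heavy_light_le assms(1,2) unfolding a_def h_def q_def by simp
  have h1h: "h1 \<le> h" unfolding h1_def h_def by (rule card_heavy_ends_le)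
  have p: "p = a + h1" unfolding p_def a_def h1_def by (rule card_core)
  have w: "w \<le> n" unfolding w_def using card_rest by simp
  have "2 * card E \<le> p * (p - 1) + 2 * (w * a) + 2 * (h1 * (3 * s - 1)) + 2 * (q * (2 * q + 2 * h + 1))"
    using twice_card_edges_le_arcs arcs_self_le[OF finite_core] arcs_rest_core_le
    unfolding a_def h1_def h_def q_def p_def w_def by linarith
  moreover have "p * (p - 1) \<le> s * s" using p h1h ahq by (intro mult_le_mono) auto
  moreover have "w * a \<le> n * (l - 2)" using w assms(3) unfolding a_def by (intro mult_le_mono) auto
  moreover have "h1 * (3 * s - 1) \<le> s * (3 * s)" using h1h ahq by (intro mult_le_mono) auto
  moreover have "q * (2 * q + 2 * h + 1) \<le> s * (2 * s + 1)" using ahq by (intro mult_le_mono) auto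
  moreover have "l * (l - 1) \<le> s * s" using assms(2) by (intro mult_le_mono) auto
  moreover have "2 * ((3 * s) choose 2) + 3 * s = 9 * (s * s)"
    unfolding twice_choose_two by (cases s) (simp_all add: algebra_simps)
  moreover have "4 * s \<le> s * s" using assms(1,2) by (intro mult_le_mono) auto
  moreover have "n * (l - 2) + n = (l - 1) * n" using assms(1) by (cases l) (simp_all add: algebra_simps)
  moreover have "s * (3 * s) = 3 * (s * s)" "s * (2 * s + 1) = 2 * (s * s) + s"
    by (simp_all add: algebra_simps)
  ultimately show ?thesis using n by linarith
qed

lemma core_arcs_bound:
  assumes "0 < l" "l - 1 \<le> card core"
  shows "arcs core core + 2 * arcs rest core + l * (l - 1)
    \<le> 2 * ((l - 1) * n) + 2 * ((t - 1) * (card core choose l))"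
proof (cases "l \<le> card core")
  case True
  have "arcs {0..<n} core \<le> (l - 1) * n + (t - 1) * (card core choose l)"
    using arcs_le_choose[OF core_subset _ assms(1), of "{0..<n}"] by simp
  moreover have "arcs rest core \<le> (l - 1) * card rest + (t - 1) * (card core choose l)"
    using arcs_le_choose[OF core_subset _ assms(1), of rest] unfolding rest_def by auto
  moreover have "card rest + l \<le> n"
    using True card_rest card_mono[OF _ core_subset] by simp
  then have "(l - 1) * card rest + l * (l - 1) \<le> (l - 1) * n"
    using mult_le_mono2[of "card rest + l" n "l - 1"] by (simp add: add_mult_distrib2 mult.commute)
  ultimately show ?thesis using twice_card_edges_split(2) by linarith
next
  case False
  define m where "m = l - 1"
  have p: "card core = m" and l: "l = m + 1" using False assms unfolding m_def by auto
  have "m \<le> n" using card_mono[OF _ core_subset] p by simp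
  then obtain k where n: "n = m + k" using le_Suc_ex by blast
  have "arcs core core \<le> m * (m - 1)" using arcs_self_le[OF finite_core] p by simp
  moreover have "arcs rest core \<le> k * m"
    using arcs_le_card_mult[OF finite_rest finite_core] card_rest p n by simp
  moreover have "m * (m - 1) + 2 * (k * m) + (m + 1) * m = 2 * (m * (m + k))"
    by (cases m) (simp_all add: algebra_simps)
  ultimately show ?thesis unfolding p l n by simp
qed

lemma twice_card_edges_le:
  assumes "3 \<le> l" "l \<le> t" "l < s" "2 * ((3 * s) choose 2) \<le> n"
  shows "2 * card E + l * (l - 1)
    \<le> 2 * ((l - 1) * n) + 2 * ((t - 1) * (s choose l)) + 2 * ex (2 * (s - l) + 1) {K_bip l t}"
proof (cases "card big + 2 \<le> l")
  case True
  then show ?thesis using few_big_bound[OF assms(1,3) True assms(4)] by linarith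
next
  case False
  define p where "p = card core"
  define h where "h = card heavy_edges"
  define q where "q = card light_edges"
  have ahq: "card big + h + q \<le> s"
    using card_big_heavy_light_le assms(1,3) unfolding h_def q_def by simp
  have p: "p = card big + card heavy_ends" "card heavy_ends \<le> h"
    unfolding p_def h_def by (rule card_core, rule card_heavy_ends_le)
  have "q * (2 * q + 2 * h + 1) + (t - 1) * (p choose l)
      \<le> (t - 1) * (s choose l) + ex (2 * (s - l) + 1) {K_bip l t}"
  proof (rule matching_term_bound)
    show "s - l \<le> 2 \<Longrightarrow> (2 * (s - l) + 1) choose 2 \<le> ex (2 * (s - l) + 1) {K_bip l t}"
      using assms(1,2) by (intro choose_two_le_ex_Kbip) linarith
  qed (use assms False ahq p in auto)
  moreover have "arcs core core + 2 * arcs rest core + l * (l - 1)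
      \<le> 2 * ((l - 1) * n) + 2 * ((t - 1) * (p choose l))"
    unfolding p_def using assms(1) False card_core by (intro core_arcs_bound) auto
  ultimately show ?thesis
    using twice_card_edges_le_arcs unfolding h_def q_def by linarith
qed

end

context KM_free_graph
begin

lemma twice_card_edges_le:
  assumes "3 \<le> l" "l \<le> t" "l < s" "2 * ((3 * s) choose 2) \<le> n"
  shows "2 * card E + l * (l - 1)
    \<le> 2 * ((l - 1) * n) + 2 * ((t - 1) * (s choose l)) + 2 * ex (2 * (s - l) + 1) {K_bip l t}"
proof -
  let ?avoiding = "\<lambda>M. matching M \<and> \<Union>M \<inter> big = {}"
  have "?avoiding {}" using matching_empty by simp
  moreover have "\<forall>M. ?avoiding M \<longrightarrow> card M < s + 1" using card_matching_le by (simp add: less_Suc_eq_le)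
  ultimately obtain M where M: "?avoiding M" "\<forall>M'. ?avoiding M' \<longrightarrow> card M' \<le> card M"
    using Lattices_Big.ex_has_greatest_nat[of ?avoiding "{}" card "s + 1"] by blast
  then interpret max_matching: big_avoiding_max_matching n E l t s M
    by unfold_locales blast+
  show ?thesis using max_matching.twice_card_edges_le[OF assms] .
qed

end

theorem corollary3p6:
  fixes l t s n :: nat
  assumes "3 \<le> l" and "l \<le> t" and "s \<ge> l + 1" and "n \<ge> 2 * ((3 * s) choose 2)"
  shows "real (ex n {K_bip l t, matching_graph (s + 1)})
           \<le> real (t - 1) * real (s choose l) + real (l - 1) * real n
              - real l * (real l - 1) / 2 + real (ex (2 * (s - l) + 1) {K_bip l t})"
proof -
  let ?F = "{K_bip l t, matching_graph (s + 1)}"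
  have "{0, l} \<in> snd (K_bip l t)" "{0, 1} \<in> snd (matching_graph (s + 1))"
    using assms(1,2) unfolding K_bip_def matching_graph_def by force+
  then obtain E where E: "simple_graph ({0..<n}, E)" "\<forall>H\<in>?F. \<not> subgraph_of H ({0..<n}, E)"
    "ex n ?F = card E"
    using ex_attained[of ?F n] by blast
  interpret KM_free_graph n E l t s
    using E by unfold_locales auto
  have "2 * card E + l * (l - 1)
    \<le> 2 * ((l - 1) * n) + 2 * ((t - 1) * (s choose l)) + 2 * ex (2 * (s - l) + 1) {K_bip l t}"
    using assms by (intro twice_card_edges_le) auto
  then have "real (2 * card E + l * (l - 1))
    \<le> real (2 * ((l - 1) * n) + 2 * ((t - 1) * (s choose l)) + 2 * ex (2 * (s - l) + 1) {K_bip l t})"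
    by (simp only: of_nat_le_iff)
  moreover have "real (l * (l - 1)) = real l * (real l - 1)" using assms(1) by (simp add: of_nat_diff)
  ultimately show ?thesis unfolding E(3) of_nat_add of_nat_mult of_nat_numeral by linarith
qed

end
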